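(* Let $\lambda>0$, $f:\mathbb{R}^n\to\mathbb{R}$ twice continuously differentiable, $\varphi=f+\lambda\|\cdot\|_1$, and $x^0$ with $\mathcal{L}_\varphi(x^0)$ bounded and $f$ twice uniformly Lipschitz continuously differentiable on an open neighborhood of it. Suppose that at iteration $k$ of HPGNCM (described in the context) the MEO is invoked and returns a direction with curvature less than or equal to $-\frac12\varepsilon_h$ (so that a negative curvature step is taken). Then $$\varphi(x^k)-\varphi(x^{k+1})>\frac18c_{nc}\min\{\varepsilon_g\varepsilon_h,\varepsilon_h^3\},\qquad c_{nc}=\eta\theta^2\min\Big\{1,\frac{9(1-2\eta)^2}{L_H^2}\Big\}.$$
   Context: $L_H>0$ is such that $f(y)\le f(x)+\nabla f(x)^\top(y-x)+\frac12(y-x)^\top\nabla^2f(x)(y-x)+\frac{L_H}6\|y-x\|^3$ for $x,y\in\mathcal{L}_\varphi(x^0)=\{x:\varphi(x)\le\varphi(x^0)\}$. $\mathcal{G}_t(x):=t(x-\mathrm{prox}_{\frac\lambda t\|\cdot\|_1}(x-\frac1t\nabla f(x)))$; $\mathrm{sgn}(0)=1$; $g(x)_i=(\nabla f(x))_i+\lambda$ ($x_i>0$), $(\nabla f(x))_i-\lambda$ ($x_i<0$), $(\nabla f(x))_i-\min\{\max\{-\lambda,(\nabla f(x))_i\},\lambda\}$ ($x_i=0$). MEO: given symmetric $H$, tolerance $\epsilon$, failure probability $\sigma$, returns either $\hat\lambda\le-\epsilon/2$ and unit $v$ with $v^\top Hv=\hat\lambda$, or a certificate that $\lambda_{\min}(H)\ge-\epsilon$.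 HPGNCM (parameters $0<\varepsilon_g,\varepsilon_h<1$, $\beta>1$, $\bar\eta\in(0,1]$, $\eta\in(0,\frac12)$, $\theta\in(0,1)$, $t_0=1$, $t_k$ the most recently computed step parameter): if $\|\mathcal{G}_{t_k}(x^k)\|>\varepsilon_g$, proximal gradient step $x^{k+1}=\mathrm{prox}_{\frac\lambda{t_k}\|\cdot\|_1}(x^k-\frac1{t_k}\nabla f(x^k))$ with $t_k=\beta^{j_k}$, $j_k$ the smallest nonnegative $j$ with $\varphi(\mathrm{prox}_{\frac\lambda{\beta^j}\|\cdot\|_1}(x^k-\beta^{-j}\nabla f(x^k)))<\varphi(x^k)-\frac{\bar\eta}{\beta^j}\|\mathcal{G}_{\beta^j}(x^k)\|^2$. Otherwise, with $I^k_{\neq0}=\{i:x^k_i\neq0\}$, $I^k_0=\{i:x^k_i=0\}$, $S^k=\mathrm{Diag}(s)$ ($s_i=1$ if $|x^k_i|>\varepsilon_g^{1/2}$, else $s_i=x^k_i$), call MEO with $\epsilon=\varepsilon_h$ on $H_k=S^k_{I^k_{\neq0}}(\nabla^2f(x^k))_{I^k_{\neq0}}S^k_{I^k_{\neq0}}$; on certificate stop; otherwise with the returned unit $u$ ($u^\top H_ku=\lambda_{\min}\le-\varepsilon_h/2$) set $d^k_{I^k_{\neq0}}=-\mathrm{sgn}((g(x^k)_{I^k_{\neq0}})^\top S^k_{I^k_{\neq0}}u)|u^\top H_ku|u$, $d^k_{I^k_0}=0$, and $x^{k+1}=x^k+\theta^{j_k}S^kd^k$ with $j_k$ the smallest nonnegative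 integer $j$ such that $\varphi(x^k+\theta^jS^kd^k)<\varphi(x^k)-\eta\theta^{2j}\|d^k\|^3$. *)

theory Defs
  imports "HOL-Analysis.Analysis"
begin

definition l1norm :: "real^'n \<Rightarrow> real" where
  "l1norm x = (\<Sum>i\<in>UNIV. \<bar>x $ i\<bar>)"

definition phi :: "(real^'n \<Rightarrow> real) \<Rightarrow> real \<Rightarrow> real^'n \<Rightarrow> real" where
  "phi f lam x = f x + lam * l1norm x"

definition prox_l1 :: "real \<Rightarrow> real^'n \<Rightarrow> real^'n" where
  "prox_l1 c z = (THE y. \<forall>w. c * l1norm y + (norm (y - z))\<^sup>2 / 2
                              \<le> c * l1norm w + (norm (w - z))\<^sup>2 / 2)"

definition gmap :: "(real^'n \<Rightarrow> real^'n) \<Rightarrow> real \<Rightarrow> real \<Rightarrow> real^'n \<Rightarrow> real^'n" where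
  "gmap gradf lam t x = t *\<^sub>R (x - prox_l1 (lam / t) (x - (1 / t) *\<^sub>R gradf x))"

definition sgn1 :: "real \<Rightarrow> real" where
  "sgn1 a = (if a \<ge> 0 then 1 else -1)"

definition gvec :: "(real^'n \<Rightarrow> real^'n) \<Rightarrow> real \<Rightarrow> real^'n \<Rightarrow> real^'n" where
  "gvec gradf lam x = (\<chi> i. if x $ i > 0 then gradf x $ i + lam
                            else if x $ i < 0 then gradf x $ i - lam
                            else gradf x $ i - min (max (- lam) (gradf x $ i)) lam)"

definition Smat :: "real \<Rightarrow> real^'n \<Rightarrow> real^'n^'n" where
  "Smat eg x = (\<chi> i j. if i = j then (if \<bar>x $ i\<bar> > sqrt eg then 1 else x $ i) else 0)"

definition pg_ok :: "(real^'n \<Rightarrow> real) \<Rightarrow> (real^'n \<Rightarrow> real^'n) \<Rightarrow> real \<Rightarrow> real \<Rightarrow> real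
                     \<Rightarrow> real^'n \<Rightarrow> nat \<Rightarrow> bool" where
  "pg_ok f gradf lam beta etabar x j =
     (phi f lam (prox_l1 (lam / beta ^ j) (x - (1 / beta ^ j) *\<^sub>R gradf x))
        < phi f lam x - etabar / beta ^ j * (norm (gmap gradf lam (beta ^ j) x))\<^sup>2)"

text \<open>Proximal gradient iteration: state (x, t) with t the most recently computed
  step parameter goes to (x', t').\<close>
definition pg_step :: "(real^'n \<Rightarrow> real) \<Rightarrow> (real^'n \<Rightarrow> real^'n) \<Rightarrow> real \<Rightarrow> real \<Rightarrow> real \<Rightarrow> real
                     \<Rightarrow> real^'n \<Rightarrow> real \<Rightarrow> real^'n \<Rightarrow> real \<Rightarrow> bool" where
  "pg_step f gradf lam eg beta etabar x t x' t' =
     (norm (gmap gradf lam t x) > eg \<and>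
      (\<exists>j::nat. pg_ok f gradf lam beta etabar x j \<and> (\<forall>i<j. \<not> pg_ok f gradf lam beta etabar x i)
         \<and> t' = beta ^ j
         \<and> x' = prox_l1 (lam / beta ^ j) (x - (1 / beta ^ j) *\<^sub>R gradf x)))"

text \<open>Negative curvature direction built from an MEO output u (a unit vector supported
  on the index set {i. x_i \<noteq> 0}, i.e. a unit vector of R^{I_{\<noteq>0}} padded with zeros)\<close>
definition nc_dir :: "(real^'n \<Rightarrow> real^'n) \<Rightarrow> real \<Rightarrow> real \<Rightarrow> real^'n \<Rightarrow> real^'n \<Rightarrow> real \<Rightarrow> real^'n" where
  "nc_dir gradf lam eg x u lh =
     (- sgn1 (gvec gradf lam x \<bullet> (Smat eg x *v u)) * \<bar>lh\<bar>) *\<^sub>R u"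

definition nc_ok :: "(real^'n \<Rightarrow> real) \<Rightarrow> real \<Rightarrow> real \<Rightarrow> real \<Rightarrow> real^'n \<Rightarrow> real^'n \<Rightarrow> real^'n^'n
                     \<Rightarrow> nat \<Rightarrow> bool" where
  "nc_ok f lam eta theta x d S j =
     (phi f lam (x + theta ^ j *\<^sub>R (S *v d)) < phi f lam x - eta * theta ^ (2 * j) * norm d ^ 3)"

text \<open>Negative curvature iteration in which the MEO (called with epsilon = eps_h on
  H_k = S_I (Hess f)_II S_I) returns lh \<le> -eps_h/2 and unit u with u^T H_k u = lh.\<close>
definition nc_step :: "(real^'n \<Rightarrow> real) \<Rightarrow> (real^'n \<Rightarrow> real^'n) \<Rightarrow> (real^'n \<Rightarrow> real^'n^'n)
                     \<Rightarrow> real \<Rightarrow> real \<Rightarrow> real \<Rightarrow> real \<Rightarrow> real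
                     \<Rightarrow> real^'n \<Rightarrow> real \<Rightarrow> real^'n \<Rightarrow> real \<Rightarrow> bool" where
  "nc_step f gradf hessf lam eg eh eta theta x t x' t' =
     (norm (gmap gradf lam t x) \<le> eg \<and> t' = t \<and>
      (\<exists>u lh (j::nat).
          (\<forall>i. x $ i = 0 \<longrightarrow> u $ i = 0) \<and> norm u = 1 \<and>
          u \<bullet> ((Smat eg x ** hessf x ** Smat eg x) *v u) = lh \<and> lh \<le> - eh / 2 \<and>
          nc_ok f lam eta theta x (nc_dir gradf lam eg x u lh) (Smat eg x) j \<and>
          (\<forall>i<j. \<not> nc_ok f lam eta theta x (nc_dir gradf lam eg x u lh) (Smat eg x) i) \<and>
          x' = x + theta ^ j *\<^sub>R (Smat eg x *v nc_dir gradf lam eg x u lh)))"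

end

theory Submission
  imports Defs
begin

text \<open>Write \<open>v = S d\<close> for the scaled negative curvature direction and \<open>\<lambda>\<^sub>h\<close> for the
  curvature returned by the MEO. For steps \<open>a \<le> \<surd>\<epsilon>\<^sub>g / |\<lambda>\<^sub>h|\<close> no coordinate of \<open>x + a v\<close>
  changes sign, so \<open>\<lambda>\<parallel>\<cdot>\<parallel>\<^sub>1\<close> is affine along the segment, and the sign chosen for \<open>d\<close> makes
  the first order term \<open>g(x)\<^sup>T v\<close> nonpositive; the curvature along \<open>v\<close> is
  \<open>v\<^sup>T \<nabla>\<^sup>2f(x) v = \<lambda>\<^sub>h\<^sup>3\<close>. The cubic upper bound then yields the Armijo decrease
  \<open>\<eta> a\<^sup>2 |\<lambda>\<^sub>h|\<^sup>3\<close> for every \<open>a < min (3(1 - 2\<eta>)/L\<^sub>H) (\<surd>\<epsilon>\<^sub>g / |\<lambda>\<^sub>h|)\<close>, as long as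
  \<open>x + a v\<close> stays in the level set, the only place where that bound is available. It does
  stay there by a continuity argument along the ray, started by a second order Taylor
  expansion at \<open>a = 0\<close>. Hence backtracking stops with \<open>\<theta>\<^sup>j \<ge> \<theta> min 1 (\<dots>)\<close>, and
  \<open>|\<lambda>\<^sub>h| \<ge> \<epsilon>\<^sub>h / 2\<close> turns the decrease \<open>\<eta> \<theta>\<^sup>2\<^sup>j |\<lambda>\<^sub>h|\<^sup>3\<close> into the claimed bound.\<close>

section \<open>Descent along a ray under a cubic upper model\<close>

lemma has_derivative_along_line:
  assumes "(g has_derivative g') (at (x + t *\<^sub>R v))"
  shows "((\<lambda>a. g (x + a *\<^sub>R v)) has_derivative (\<lambda>a. a *\<^sub>R g' v)) (at t)"
proof -
  have "((\<lambda>a. x + a *\<^sub>R v) has_derivative (\<lambda>a. a *\<^sub>R v)) (at t)"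
    by (auto intro!: derivative_eq_intros)
  from has_derivative_compose[OF this assms] show ?thesis
    using has_derivative_bounded_linear[OF assms] by (simp add: o_def linear_simps)
qed

lemma second_order_mean_value_along_line:
  fixes f :: "real^'n \<Rightarrow> real" and gradf :: "real^'n \<Rightarrow> real^'n"
    and hessf :: "real^'n \<Rightarrow> real^'n^'n"
  assumes grad: "\<And>y. (f has_derivative (\<lambda>h. gradf y \<bullet> h)) (at y)"
    and hess: "\<And>y. (gradf has_derivative (\<lambda>h. hessf y *v h)) (at y)"
    and "0 < a"
  obtains t where "0 < t" "t < a"
    "f (x + a *\<^sub>R v) = f x + a * (gradf x \<bullet> v) + a\<^sup>2 / 2 * (v \<bullet> (hessf (x + t *\<^sub>R v) *v v))"
proof -
  define df where "df = (\<lambda>m::nat. if m = 0 then (\<lambda>s. f (x + s *\<^sub>R v))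
    else if m = 1 then (\<lambda>s. gradf (x + s *\<^sub>R v) \<bullet> v) else (\<lambda>s. v \<bullet> (hessf (x + s *\<^sub>R v) *v v)))"
  have "DERIV (df m) s :> df (Suc m) s" if "m < 2" for m s
  proof -
    have "m = 0 \<or> m = 1" using that by auto
    moreover have "((\<lambda>a. gradf (x + a *\<^sub>R v) \<bullet> v) has_derivative
        (\<lambda>a. (a *\<^sub>R (hessf (x + s *\<^sub>R v) *v v)) \<bullet> v)) (at s)"
      by (rule has_derivative_inner_left[OF has_derivative_along_line[OF hess]])
    ultimately show ?thesis
      using has_derivative_along_line[OF grad, where x = x and t = s and v = v]
      by (auto simp: df_def inner_commute intro!: has_derivative_imp_has_field_derivative)
  qed
  then have "\<exists>t. 0 < t \<and> t < a \<and>
      df 0 a = (\<Sum>m<2. df m 0 / fact m * (a - 0) ^ m) + df 2 t / fact 2 * (a - 0) ^ 2"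
    using \<open>0 < a\<close> by (intro Taylor_up) auto
  then obtain t where "0 < t" "t < a"
    "df 0 a = (\<Sum>m<2. df m 0 / fact m * (a - 0) ^ m) + df 2 t / fact 2 * (a - 0) ^ 2"
    by blast
  then show thesis
    by (intro that[of t]) (simp_all add: df_def eval_nat_numeral mult.commute)
qed

lemma bounded_linear_matrix_vector_mult_left: "bounded_linear (\<lambda>A::real^'n^'m. A *v v)"
  unfolding linear_conv_bounded_linear[symmetric]
  by (rule linearI) (auto simp: matrix_vector_mult_add_rdistrib scaleR_matrix_vector_assoc)

lemma real_interval_induct:
  fixes P :: "real \<Rightarrow> bool"
  assumes start: "eventually P (at_right 0)"
    and step: "\<And>s. 0 < s \<Longrightarrow> s < b \<Longrightarrow> (\<And>a. 0 < a \<Longrightarrow> a < s \<Longrightarrow> P a) \<Longrightarrow> P s"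
    and right: "\<And>s. 0 < s \<Longrightarrow> s < b \<Longrightarrow> P s \<Longrightarrow> eventually P (at_right s)"
    and a: "0 < a" "a < b"
  shows "P a"
proof (rule ccontr)
  define F where "F = {a. 0 < a \<and> a < b \<and> \<not> P a}"
  assume "\<not> P a"
  then have "a \<in> F" using a by (simp add: F_def)
  have bdd: "bdd_below F" by (auto simp: F_def intro: bdd_belowI[of _ 0])
  define s where "s = Inf F"
  have le_s: "s \<le> a'" if "a' \<in> F" for a'
    unfolding s_def using that bdd by (rule cInf_lower)
  have "0 \<le> s" unfolding s_def using \<open>a \<in> F\<close> by (intro cInf_greatest) (auto simp: F_def)
  have "s < b" using le_s[OF \<open>a \<in> F\<close>] a by simp
  have below: "P a'" if "0 < a'" "a' < s" for a'
  proof (rule ccontr)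
    assume "\<not> P a'"
    then have "a' \<in> F" using that \<open>s < b\<close> by (simp add: F_def)
    then show False using le_s that by fastforce
  qed
  have Ps: "P s" if "s \<noteq> 0"
    by (rule step) (use that \<open>0 \<le> s\<close> \<open>s < b\<close> below in auto)
  have "eventually P (at_right s)"
    using start right[OF _ \<open>s < b\<close> Ps] \<open>0 \<le> s\<close> by (cases "s = 0") auto
  then obtain e where "e > s" and e: "\<And>y. s < y \<Longrightarrow> y < e \<Longrightarrow> P y"
    by (auto simp: eventually_at_right_field)
  have "e \<le> a'" if "a' \<in> F" for a'
  proof (rule ccontr)
    assume "\<not> e \<le> a'"
    moreover have "0 < a'" "\<not> P a'" using that by (auto simp: F_def)
    ultimately show False using le_s[OF that] e[of a'] Ps by (cases "a' = s") auto
  qed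
  then have "e \<le> s" unfolding s_def using \<open>a \<in> F\<close> by (intro cInf_greatest) auto
  then show False using \<open>e > s\<close> by simp
qed

lemma isCont_le_of_le_at_left:
  fixes g :: "real \<Rightarrow> real"
  assumes "isCont g s" "0 < s" "\<And>a. 0 < a \<Longrightarrow> a < s \<Longrightarrow> g a \<le> c"
  shows "g s \<le> c"
proof (rule tendsto_upperbound)
  show "(g \<longlongrightarrow> g s) (at_left s)"
    using assms(1) by (simp add: isCont_def filterlim_at_split)
  show "eventually (\<lambda>a. g a \<le> c) (at_left s)"
    using eventually_at_left_real[OF \<open>0 < s\<close>] by (rule eventually_mono) (simp add: assms(3))
qed simp

lemma eventually_second_order_descent:
  fixes f F :: "real^'n \<Rightarrow> real" and gradf :: "real^'n \<Rightarrow> real^'n"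
    and hessf :: "real^'n \<Rightarrow> real^'n^'n"
  assumes grad: "\<And>y. (f has_derivative (\<lambda>h. gradf y \<bullet> h)) (at y)"
    and hess: "\<And>y. (gradf has_derivative (\<lambda>h. hessf y *v h)) (at y)"
    and hess_cont: "continuous_on UNIV hessf"
    and F_le: "\<And>a. 0 < a \<Longrightarrow> a < r \<Longrightarrow>
                 F (x + a *\<^sub>R v) - F x \<le> f (x + a *\<^sub>R v) - f x - a * (gradf x \<bullet> v)"
    and r: "0 < r" and curv: "v \<bullet> (hessf x *v v) < - 2 * \<kappa>"
  shows "eventually (\<lambda>a. F (x + a *\<^sub>R v) < F x - \<kappa> * a\<^sup>2) (at_right 0)"
proof -
  define q where "q t = v \<bullet> (hessf (x + t *\<^sub>R v) *v v)" for t
  have "continuous_on UNIV (\<lambda>t. hessf (x + t *\<^sub>R v))"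
    by (rule continuous_on_compose2[OF hess_cont]) (auto intro!: continuous_intros)
  then have "continuous_on UNIV q"
    unfolding q_def by (intro continuous_intros
        bounded_linear.continuous_on[OF bounded_linear_matrix_vector_mult_left])
  then have "isCont q 0" by (simp add: continuous_on_eq_continuous_at)
  moreover have "q 0 < - 2 * \<kappa>" using curv by (simp add: q_def)
  ultimately have "eventually (\<lambda>t. q t < - 2 * \<kappa>) (at 0)"
    unfolding isCont_def by (rule order_tendstoD)
  then obtain \<delta> where "\<delta> > 0" and \<delta>: "\<And>t. t \<noteq> 0 \<Longrightarrow> \<bar>t\<bar> < \<delta> \<Longrightarrow> q t < - 2 * \<kappa>"
    by (auto simp: eventually_at dist_real_def)
  have "F (x + a *\<^sub>R v) < F x - \<kappa> * a\<^sup>2" if "0 < a" "a < min \<delta> r" for a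
  proof -
    obtain t where "0 < t" "t < a"
      and taylor: "f (x + a *\<^sub>R v) = f x + a * (gradf x \<bullet> v) + a\<^sup>2 / 2 * q t"
      using second_order_mean_value_along_line[OF grad hess \<open>0 < a\<close>] unfolding q_def by blast
    have "a\<^sup>2 / 2 * q t < a\<^sup>2 / 2 * (- 2 * \<kappa>)"
      using \<delta>[of t] \<open>0 < t\<close> \<open>t < a\<close> that by (intro mult_strict_left_mono) auto
    then show ?thesis using F_le[of a] taylor that by (simp add: algebra_simps)
  qed
  moreover have "eventually (\<lambda>a. a \<in> {0<..<min \<delta> r}) (at_right 0)"
    using \<open>\<delta> > 0\<close> r by (intro eventually_at_right_real) simp
  ultimately show ?thesis by (auto elim: eventually_mono)
qed

lemma cubic_model_descent:
  fixes f :: "real^'n \<Rightarrow> real" and gradf :: "real^'n \<Rightarrow> real^'n"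
    and hessf :: "real^'n \<Rightarrow> real^'n^'n"
  assumes cubic: "f (x + s *\<^sub>R v) \<le> f x + gradf x \<bullet> (s *\<^sub>R v)
                    + 1/2 * ((s *\<^sub>R v) \<bullet> (hessf x *v (s *\<^sub>R v))) + LH / 6 * norm (s *\<^sub>R v) ^ 3"
    and curv: "v \<bullet> (hessf x *v v) = - (\<mu> ^ 3)" and norm_v: "norm v \<le> \<mu>"
    and \<mu>: "0 < \<mu>" and LH: "0 < LH" and s: "0 < s" "s < 3 * (1 - 2 * eta) / LH"
  shows "f (x + s *\<^sub>R v) - f x - s * (gradf x \<bullet> v) < - eta * s\<^sup>2 * \<mu> ^ 3"
proof -
  have "f (x + s *\<^sub>R v) \<le> f x + s * (gradf x \<bullet> v) + s\<^sup>2 / 2 * (v \<bullet> (hessf x *v v))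
               + LH / 6 * (s * norm v) ^ 3"
    using cubic s by (simp add: matrix_vector_mult_scaleR power2_eq_square algebra_simps)
  also have "\<dots> \<le> f x + s * (gradf x \<bullet> v) - s\<^sup>2 * \<mu> ^ 3 * (1/2 - LH * s / 6)"
  proof -
    have "LH / 6 * (s * norm v) ^ 3 \<le> LH / 6 * (s * \<mu>) ^ 3"
      using norm_v LH s by (intro mult_left_mono power_mono) auto
    then show ?thesis
      using curv by (simp add: power_mult_distrib algebra_simps power2_eq_square power3_eq_cube)
  qed
  also have "\<dots> < f x + s * (gradf x \<bullet> v) - eta * s\<^sup>2 * \<mu> ^ 3"
  proof -
    have "LH * s < 3 * (1 - 2 * eta)" using s LH by (simp add: field_simps)
    then have "eta < 1/2 - LH * s / 6" by simp
    then show ?thesis using s \<mu> by (simp add: mult.assoc)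
  qed
  finally show ?thesis by simp
qed

lemma negative_curvature_descent:
  fixes f F :: "real^'n \<Rightarrow> real" and gradf :: "real^'n \<Rightarrow> real^'n"
    and hessf :: "real^'n \<Rightarrow> real^'n^'n"
  assumes grad: "\<And>y. (f has_derivative (\<lambda>h. gradf y \<bullet> h)) (at y)"
    and hess: "\<And>y. (gradf has_derivative (\<lambda>h. hessf y *v h)) (at y)"
    and hess_cont: "continuous_on UNIV hessf"
    and F_cont: "continuous_on UNIV (\<lambda>a. F (x + a *\<^sub>R v))"
    and F_le: "\<And>a. 0 < a \<Longrightarrow> a < r \<Longrightarrow>
                 F (x + a *\<^sub>R v) - F x \<le> f (x + a *\<^sub>R v) - f x - a * (gradf x \<bullet> v)"
    and level: "F x \<le> c"
    and cubic: "\<And>z. F z \<le> c \<Longrightarrow> f z \<le> f x + gradf x \<bullet> (z - x)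
                  + 1/2 * ((z - x) \<bullet> (hessf x *v (z - x))) + LH / 6 * norm (z - x) ^ 3"
    and curv: "v \<bullet> (hessf x *v v) = - (\<mu> ^ 3)" and norm_v: "norm v \<le> \<mu>"
    and \<mu>: "0 < \<mu>" and r: "0 < r" and LH: "0 < LH" and eta: "0 \<le> eta" "eta < 1/2"
    and a: "0 < a" "a < min r (3 * (1 - 2 * eta) / LH)"
  shows "F (x + a *\<^sub>R v) < F x - eta * a\<^sup>2 * \<mu> ^ 3"
proof -
  define b where "b = min r (3 * (1 - 2 * eta) / LH)"
  define R where "R a = F (x + a *\<^sub>R v) - F x + eta * a\<^sup>2 * \<mu> ^ 3" for a
  have R_cont: "isCont R s" for s
    using F_cont unfolding R_def by (intro continuous_intros) (simp add: continuous_on_eq_continuous_at)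
  have "R a < 0"
  proof (rule real_interval_induct[where P = "\<lambda>a. R a < 0" and b = b])
    have "v \<bullet> (hessf x *v v) < - 2 * (eta * \<mu> ^ 3)" using curv \<mu> eta by simp
    from eventually_second_order_descent[OF grad hess hess_cont F_le r this]
    show "eventually (\<lambda>a. R a < 0) (at_right 0)"
      by (rule eventually_mono) (auto simp: R_def mult_ac)
  next
    fix s assume "0 < s" "s < b" and below: "\<And>a. 0 < a \<Longrightarrow> a < s \<Longrightarrow> R a < 0"
    have le_c: "F (x + a *\<^sub>R v) \<le> c" if "0 < a" "a < s" for a
    proof -
      have "0 \<le> eta * a\<^sup>2 * \<mu> ^ 3" using eta \<mu> by simp
      then show ?thesis using below[OF that] level unfolding R_def by linarith
    qed
    have "isCont (\<lambda>a. F (x + a *\<^sub>R v)) s"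
      using F_cont by (simp add: continuous_on_eq_continuous_at)
    from isCont_le_of_le_at_left[OF this \<open>0 < s\<close> le_c]
    have "F (x + s *\<^sub>R v) \<le> c" by simp
    then have cubic_s: "f (x + s *\<^sub>R v) \<le> f x + gradf x \<bullet> (s *\<^sub>R v)
        + 1/2 * ((s *\<^sub>R v) \<bullet> (hessf x *v (s *\<^sub>R v))) + LH / 6 * norm (s *\<^sub>R v) ^ 3"
      using cubic[of "x + s *\<^sub>R v"] by (simp only: add_diff_cancel_left')
    have "s < 3 * (1 - 2 * eta) / LH" using \<open>s < b\<close> by (simp add: b_def)
    note cubic_model_descent[where f = f and gradf = gradf and hessf = hessf, OF cubic_s curv norm_v \<mu> LH \<open>0 < s\<close> this]
    then show "R s < 0" using F_le[of s] \<open>0 < s\<close> \<open>s < b\<close> unfolding R_def b_def by simp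
  next
    fix s assume "R s < 0"
    then have "eventually (\<lambda>a. R a < 0) (at s)"
      using order_tendstoD(2)[OF R_cont[of s, unfolded isCont_def]] by simp
    then show "eventually (\<lambda>a. R a < 0) (at_right s)"
      by (simp add: eventually_at_split)
  qed (use a in \<open>simp_all add: b_def\<close>)
  then show ?thesis unfolding R_def by simp
qed

section \<open>The negative curvature step\<close>

lemma l1norm_add_sign_preserving:
  fixes x v :: "real^'n"
  assumes "\<And>i. v $ i \<noteq> 0 \<Longrightarrow> \<bar>v $ i\<bar> < \<bar>x $ i\<bar>"
  shows "l1norm (x + v) = l1norm x + (\<Sum>i\<in>UNIV. sgn (x $ i) * v $ i)"
proof -
  have "\<bar>x $ i + v $ i\<bar> = \<bar>x $ i\<bar> + sgn (x $ i) * v $ i" for i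
    using assms[of i] by (cases "v $ i = 0") (auto simp: abs_if sgn_if split: if_splits)
  then show ?thesis unfolding l1norm_def by (simp add: sum.distrib)
qed

lemma inner_gvec_eq:
  assumes "\<And>i. x $ i = 0 \<Longrightarrow> v $ i = 0"
  shows "gvec gradf lam x \<bullet> v = gradf x \<bullet> v + lam * (\<Sum>i\<in>UNIV. sgn (x $ i) * v $ i)"
proof -
  have "gvec gradf lam x $ i * v $ i = gradf x $ i * v $ i + lam * (sgn (x $ i) * v $ i)" for i
    using assms[of i] by (auto simp: gvec_def sgn_if algebra_simps)
  then show ?thesis unfolding inner_vec_def by (simp add: sum.distrib sum_distrib_left)
qed

lemma phi_add_sign_preserving:
  assumes "\<And>i. v $ i \<noteq> 0 \<Longrightarrow> \<bar>a * v $ i\<bar> < \<bar>x $ i\<bar>"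
  shows "phi f lam (x + a *\<^sub>R v) = phi f lam x + (f (x + a *\<^sub>R v) - f x - a * (gradf x \<bullet> v))
           + a * (gvec gradf lam x \<bullet> v)"
proof -
  have "l1norm (x + a *\<^sub>R v) = l1norm x + (\<Sum>i\<in>UNIV. sgn (x $ i) * (a *\<^sub>R v) $ i)"
    using assms by (intro l1norm_add_sign_preserving) auto
  moreover have "gvec gradf lam x \<bullet> v = gradf x \<bullet> v + lam * (\<Sum>i\<in>UNIV. sgn (x $ i) * v $ i)"
    using assms by (intro inner_gvec_eq) force
  ultimately show ?thesis
    unfolding phi_def by (simp add: sum_distrib_left algebra_simps)
qed

lemma continuous_on_phi_along_line:
  fixes f :: "real^'n \<Rightarrow> real"
  assumes "\<And>y. (f has_derivative (\<lambda>h. gradf y \<bullet> h)) (at y)"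
  shows "continuous_on UNIV (\<lambda>a::real. phi f lam (x + a *\<^sub>R v))"
proof -
  have "continuous_on UNIV (\<lambda>y. phi f lam y)"
    using has_derivative_continuous[OF assms]
    unfolding phi_def l1norm_def
    by (intro continuous_intros continuous_at_imp_continuous_on) auto
  then show ?thesis
    by (rule continuous_on_compose2) (auto intro!: continuous_intros)
qed

lemma Smat_mult_component:
  "(Smat eg x *v w) $ i = (if \<bar>x $ i\<bar> > sqrt eg then 1 else x $ i) * w $ i"
  unfolding Smat_def matrix_vector_mult_def
  by (simp add: if_distrib[of "\<lambda>z. z * _"] cong: if_cong)

lemma inner_Smat_commute: "u \<bullet> (Smat eg x *v w) = (Smat eg x *v u) \<bullet> w"
  unfolding inner_vec_def by (simp add: Smat_mult_component mult_ac)

lemma norm_Smat_mult_le: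
  assumes "eg < 1"
  shows "norm (Smat eg x *v w) \<le> norm w"
proof (rule norm_le_componentwise_cart)
  fix i
  show "norm ((Smat eg x *v w) $ i) \<le> norm (w $ i)"
  proof (cases "\<bar>x $ i\<bar> > sqrt eg")
    case False
    then have "\<bar>x $ i\<bar> \<le> 1" using assms real_sqrt_lt_1_iff[of eg] by linarith
    then show ?thesis using False by (simp add: Smat_mult_component abs_mult mult_left_le_one_le)
  qed (simp add: Smat_mult_component)
qed

lemma Smat_step_sign_preserving:
  assumes eg: "0 < eg" "eg < 1" and supp: "\<And>i. x $ i = 0 \<Longrightarrow> d $ i = 0"
    and a: "0 \<le> a" "a * norm d \<le> sqrt eg" and nz: "(Smat eg x *v d) $ i \<noteq> 0"
  shows "\<bar>a * (Smat eg x *v d) $ i\<bar> < \<bar>x $ i\<bar>"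
proof -
  have "x $ i \<noteq> 0" using nz supp by (auto simp: Smat_mult_component)
  have "a * \<bar>d $ i\<bar> \<le> sqrt eg"
    using a component_le_norm_cart[of d i] by (meson mult_left_mono order_trans)
  show ?thesis
  proof (cases "\<bar>x $ i\<bar> > sqrt eg")
    case True
    then show ?thesis using \<open>a * \<bar>d $ i\<bar> \<le> sqrt eg\<close> a
      by (simp add: Smat_mult_component abs_mult)
  next
    case False
    have "\<bar>a * (Smat eg x *v d) $ i\<bar> = a * \<bar>d $ i\<bar> * \<bar>x $ i\<bar>"
      using False a by (simp add: Smat_mult_component abs_mult)
    also have "\<dots> \<le> sqrt eg * \<bar>x $ i\<bar>"
      using \<open>a * \<bar>d $ i\<bar> \<le> sqrt eg\<close> by (simp add: mult_right_mono)
    also have "\<dots> < \<bar>x $ i\<bar>" using eg \<open>x $ i \<noteq> 0\<close> by simp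
    finally show ?thesis .
  qed
qed

lemma abs_sgn1 [simp]: "\<bar>sgn1 a\<bar> = 1"
  by (simp add: sgn1_def)

lemma norm_nc_dir:
  assumes "norm u = 1"
  shows "norm (nc_dir gradf lam eg x u lh) = \<bar>lh\<bar>"
  using assms by (simp add: nc_dir_def abs_mult)

lemma Smat_mult_nc_dir:
  "Smat eg x *v nc_dir gradf lam eg x u lh
     = (- sgn1 (gvec gradf lam x \<bullet> (Smat eg x *v u)) * \<bar>lh\<bar>) *\<^sub>R (Smat eg x *v u)"
  unfolding nc_dir_def by (rule matrix_vector_mult_scaleR)

lemma inner_gvec_nc_dir_nonpos:
  "gvec gradf lam x \<bullet> (Smat eg x *v nc_dir gradf lam eg x u lh) \<le> 0"
proof -
  define g where "g = gvec gradf lam x \<bullet> (Smat eg x *v u)"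
  have "gvec gradf lam x \<bullet> (Smat eg x *v nc_dir gradf lam eg x u lh) = - \<bar>lh\<bar> * (sgn1 g * g)"
    by (simp add: Smat_mult_nc_dir g_def)
  moreover have "sgn1 g * g = \<bar>g\<bar>" by (simp add: sgn1_def)
  ultimately show ?thesis by simp
qed

lemma nc_dir_curvature:
  assumes "u \<bullet> ((Smat eg x ** H ** Smat eg x) *v u) = lh"
  shows "(Smat eg x *v nc_dir gradf lam eg x u lh) \<bullet> (H *v (Smat eg x *v nc_dir gradf lam eg x u lh))
           = lh ^ 3"
proof -
  define w where "w = Smat eg x *v u"
  define c where "c = - sgn1 (gvec gradf lam x \<bullet> w) * \<bar>lh\<bar>"
  have "w \<bullet> (H *v w) = lh"
    using assms by (simp add: w_def inner_Smat_commute matrix_vector_mul_assoc[symmetric])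
  moreover have "c\<^sup>2 = lh\<^sup>2"
    by (metis power2_abs c_def abs_minus abs_mult abs_sgn1 mult_1)
  moreover have "Smat eg x *v nc_dir gradf lam eg x u lh = c *\<^sub>R w"
    unfolding Smat_mult_nc_dir c_def w_def ..
  ultimately show ?thesis
    by (simp add: matrix_vector_mult_scaleR power2_eq_square power3_eq_cube)
qed

lemma nc_dir_descent:
  fixes f :: "real^'n \<Rightarrow> real" and gradf :: "real^'n \<Rightarrow> real^'n"
    and hessf :: "real^'n \<Rightarrow> real^'n^'n"
  assumes grad: "\<And>y. (f has_derivative (\<lambda>h. gradf y \<bullet> h)) (at y)"
    and hess: "\<And>y. (gradf has_derivative (\<lambda>h. hessf y *v h)) (at y)"
    and hess_cont: "continuous_on UNIV hessf"
    and LH: "LH > 0"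
    and cubic: "\<forall>y\<in>{y. phi f lam y \<le> phi f lam x0}. \<forall>z\<in>{y. phi f lam y \<le> phi f lam x0}.
                  f z \<le> f y + gradf y \<bullet> (z - y) + (1/2) * ((z - y) \<bullet> (hessf y *v (z - y)))
                        + LH / 6 * norm (z - y) ^ 3"
    and eg: "0 < eg" "eg < 1" and eta: "0 \<le> eta" "eta < 1/2"
    and level: "phi f lam x \<le> phi f lam x0"
    and supp: "\<forall>i. x $ i = 0 \<longrightarrow> u $ i = 0" and norm_u: "norm u = 1"
    and lh: "u \<bullet> ((Smat eg x ** hessf x ** Smat eg x) *v u) = lh" "lh < 0"
    and a: "0 < a" "a < min (sqrt eg / \<bar>lh\<bar>) (3 * (1 - 2 * eta) / LH)"
  shows "phi f lam (x + a *\<^sub>R (Smat eg x *v nc_dir gradf lam eg x u lh))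
           < phi f lam x - eta * a\<^sup>2 * \<bar>lh\<bar> ^ 3"
proof -
  define d where "d = nc_dir gradf lam eg x u lh"
  define v where "v = Smat eg x *v d"
  have norm_d: "norm d = \<bar>lh\<bar>" using norm_u by (simp add: d_def norm_nc_dir)
  have d_supp: "d $ i = 0" if "x $ i = 0" for i using supp that by (simp add: d_def nc_dir_def)
  show ?thesis
    unfolding d_def[symmetric] v_def[symmetric]
  proof (rule negative_curvature_descent[OF grad hess hess_cont
        continuous_on_phi_along_line[OF grad], where r = "sqrt eg / \<bar>lh\<bar>" and \<mu> = "\<bar>lh\<bar>"])
    fix a' :: real assume a': "0 < a'" "a' < sqrt eg / \<bar>lh\<bar>"
    have "\<bar>a' * v $ i\<bar> < \<bar>x $ i\<bar>" if "v $ i \<noteq> 0" for i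
      unfolding v_def
    proof (rule Smat_step_sign_preserving[OF eg d_supp])
      show "a' * norm d \<le> sqrt eg" using a' lh(2) by (simp add: norm_d field_simps)
    qed (use a' that v_def in auto)
    then have "phi f lam (x + a' *\<^sub>R v) = phi f lam x
        + (f (x + a' *\<^sub>R v) - f x - a' * (gradf x \<bullet> v)) + a' * (gvec gradf lam x \<bullet> v)"
      by (rule phi_add_sign_preserving)
    moreover have "gvec gradf lam x \<bullet> v \<le> 0"
      unfolding v_def d_def by (rule inner_gvec_nc_dir_nonpos)
    ultimately show "phi f lam (x + a' *\<^sub>R v) - phi f lam x
        \<le> f (x + a' *\<^sub>R v) - f x - a' * (gradf x \<bullet> v)"
      using a' by (simp add: mult_nonneg_nonpos)
  next
    fix z assume "phi f lam z \<le> phi f lam x0"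
    then show "f z \<le> f x + gradf x \<bullet> (z - x) + 1/2 * ((z - x) \<bullet> (hessf x *v (z - x)))
                + LH / 6 * norm (z - x) ^ 3"
      using cubic level by simp
  next
    show "v \<bullet> (hessf x *v v) = - (\<bar>lh\<bar> ^ 3)"
      using nc_dir_curvature[OF lh(1)] lh(2) by (simp add: v_def d_def)
    show "norm v \<le> \<bar>lh\<bar>" using norm_Smat_mult_le[OF eg(2), of x d] norm_d by (simp add: v_def)
  qed (use level LH eta a eg lh(2) in auto)
qed

lemma nc_ok_nc_dir_iff:
  assumes "norm u = 1"
  shows "nc_ok f lam eta theta x (nc_dir gradf lam eg x u lh) S i
     \<longleftrightarrow> phi f lam (x + theta ^ i *\<^sub>R (S *v nc_dir gradf lam eg x u lh))
            < phi f lam x - eta * (theta ^ i)\<^sup>2 * \<bar>lh\<bar> ^ 3"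
  unfolding nc_ok_def norm_nc_dir[OF assms] by (simp add: power_mult mult.commute[of 2])

section \<open>Backtracking and the decrease bound\<close>

lemma backtracking_step_lower_bound:
  fixes P :: "real \<Rightarrow> bool"
  assumes P: "\<And>a. 0 < a \<Longrightarrow> a < b \<Longrightarrow> P a" and "b \<le> 1"
    and theta: "0 < theta" "theta < 1" and first: "\<And>i. i < j \<Longrightarrow> \<not> P (theta ^ i)"
  shows "theta * b \<le> theta ^ j"
proof (cases j)
  case 0
  have "theta * b \<le> 1"
  proof (cases "0 \<le> b")
    case True
    then show ?thesis using \<open>b \<le> 1\<close> theta mult_right_mono[of theta 1 b] by simp
  qed (use theta mult_pos_neg[of theta b] in simp)
  then show ?thesis using 0 by simp
next
  case (Suc i)
  have "b \<le> theta ^ i" using P[of "theta ^ i"] first[of i] Suc theta by force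
  then show ?thesis using Suc theta by simp
qed

lemma nc_decrease_lower_bound:
  fixes eta LH eg eh \<mu> :: real
  assumes "0 < eg" "0 < eh" "0 < LH" "eta < 1/2" "eh / 2 \<le> \<mu>"
  shows "min 1 (9 * (1 - 2 * eta)\<^sup>2 / LH\<^sup>2) * min (eg * eh) (eh ^ 3) / 8
           \<le> (min 1 (min (3 * (1 - 2 * eta) / LH) (sqrt eg / \<mu>)))\<^sup>2 * \<mu> ^ 3"
proof -
  define m where "m = min 1 (9 * (1 - 2 * eta)\<^sup>2 / LH\<^sup>2)"
  define M where "M = min (eg * eh) (eh ^ 3)"
  define b where "b = min 1 (min (3 * (1 - 2 * eta) / LH) (sqrt eg / \<mu>))"
  have "0 < \<mu>" using assms by linarith
  have m: "0 \<le> m" "m \<le> 1" by (auto simp: m_def)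
  have M: "0 \<le> M" "M \<le> eg * eh" "M \<le> eh ^ 3" using assms by (auto simp: M_def)
  have "(eh / 2) ^ 3 \<le> \<mu> ^ 3" using assms by (intro power_mono) auto
  then have M_le: "M / 8 \<le> \<mu> ^ 3" using M by (simp add: power_divide)
  have "m * M / 8 \<le> b\<^sup>2 * \<mu> ^ 3"
  proof -
    consider "b = 1" | "b = 3 * (1 - 2 * eta) / LH" | "b = sqrt eg / \<mu>"
      unfolding b_def by linarith
    then show ?thesis
    proof cases
      case 1
      then show ?thesis using mult_mono[OF m(2) M_le] M by simp
    next
      case 2
      then have "b\<^sup>2 = 9 * (1 - 2 * eta)\<^sup>2 / LH\<^sup>2"
        by (simp add: power_divide power2_eq_square algebra_simps)
      then have "m \<le> b\<^sup>2" by (simp add: m_def)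
      from mult_mono[OF this M_le] show ?thesis using M by simp
    next
      case 3
      have "m * M \<le> eg * eh" using mult_mono[OF m(2) M(2)] M by simp
      then have "m * M / 8 \<le> eg * eh / 2" using mult_pos_pos[OF assms(1,2)] by linarith
      also have "\<dots> \<le> eg * \<mu>" using assms by simp
      also have "\<dots> = b\<^sup>2 * \<mu> ^ 3" using 3 \<open>0 < \<mu>\<close> \<open>0 < eg\<close>
        by (simp add: power_divide power3_eq_cube power2_eq_square)
      finally show ?thesis .
    qed
  qed
  then show ?thesis by (simp only: m_def M_def b_def)
qed

lemma armijo_decrease_lower_bound:
  fixes eta theta LH eg eh \<mu> s :: real
  assumes "0 < eg" "0 < eh" "0 < LH" "0 < eta" "eta < 1/2" "0 < theta" "eh / 2 \<le> \<mu>"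
    and s: "theta * min 1 (min (3 * (1 - 2 * eta) / LH) (sqrt eg / \<mu>)) \<le> s"
  shows "1/8 * (eta * theta\<^sup>2 * min 1 (9 * (1 - 2 * eta)\<^sup>2 / LH\<^sup>2)) * min (eg * eh) (eh ^ 3)
           \<le> eta * s\<^sup>2 * \<mu> ^ 3"
proof -
  define b where "b = min 1 (min (3 * (1 - 2 * eta) / LH) (sqrt eg / \<mu>))"
  have "0 < \<mu>" "0 < b" using assms by (auto simp: b_def)
  then have "(theta * b)\<^sup>2 \<le> s\<^sup>2" using s assms by (simp add: b_def power_mono)
  have "1/8 * (eta * theta\<^sup>2 * min 1 (9 * (1 - 2 * eta)\<^sup>2 / LH\<^sup>2)) * min (eg * eh) (eh ^ 3)
      = eta * theta\<^sup>2 * (min 1 (9 * (1 - 2 * eta)\<^sup>2 / LH\<^sup>2) * min (eg * eh) (eh ^ 3) / 8)"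
    by simp
  also have "\<dots> \<le> eta * theta\<^sup>2 * (b\<^sup>2 * \<mu> ^ 3)"
    using nc_decrease_lower_bound[OF assms(1-3,5,7)] assms unfolding b_def
    by (intro mult_left_mono) auto
  also have "\<dots> = eta * (theta * b)\<^sup>2 * \<mu> ^ 3" by (simp add: power_mult_distrib)
  also have "\<dots> \<le> eta * s\<^sup>2 * \<mu> ^ 3"
    using \<open>(theta * b)\<^sup>2 \<le> s\<^sup>2\<close> \<open>0 < \<mu>\<close> assms by (intro mult_right_mono mult_left_mono) auto
  finally show ?thesis .
qed

lemma pg_step_phi_le:
  assumes "pg_step f gradf lam eg beta etabar x t x' t'" "0 \<le> etabar" "0 < beta"
  shows "phi f lam x' \<le> phi f lam x"
proof -
  obtain j where "pg_ok f gradf lam beta etabar x j"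
    and x': "x' = prox_l1 (lam / beta ^ j) (x - (1 / beta ^ j) *\<^sub>R gradf x)"
    using assms(1) unfolding pg_step_def by blast
  then have "phi f lam x' < phi f lam x - etabar / beta ^ j * (norm (gmap gradf lam (beta ^ j) x))\<^sup>2"
    unfolding pg_ok_def by simp
  moreover have "0 \<le> etabar / beta ^ j * (norm (gmap gradf lam (beta ^ j) x))\<^sup>2"
    using assms by simp
  ultimately show ?thesis by linarith
qed

lemma nc_step_phi_le:
  assumes "nc_step f gradf hessf lam eg eh eta theta x t x' t'" "0 \<le> eta"
  shows "phi f lam x' \<le> phi f lam x"
proof -
  obtain d j where "nc_ok f lam eta theta x d (Smat eg x) j"
    and x': "x' = x + theta ^ j *\<^sub>R (Smat eg x *v d)"
    using assms(1) unfolding nc_step_def by blast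
  then have "phi f lam x' < phi f lam x - eta * theta ^ (2 * j) * norm d ^ 3"
    unfolding nc_ok_def by simp
  moreover have "0 \<le> eta * theta ^ (2 * j) * norm d ^ 3"
    using assms by (simp add: power_mult)
  ultimately show ?thesis by linarith
qed

lemma iterates_phi_le_initial:
  assumes "x 0 = x0"
    and run: "\<forall>i<k. pg_step f gradf lam eg beta etabar (x i) (t i) (x (Suc i)) (t (Suc i))
                   \<or> nc_step f gradf hessf lam eg eh eta theta (x i) (t i) (x (Suc i)) (t (Suc i))"
    and "0 \<le> etabar" "0 < beta" "0 \<le> eta" "i \<le> k"
  shows "phi f lam (x i) \<le> phi f lam x0"
  using \<open>i \<le> k\<close>
proof (induction i)
  case 0
  then show ?case using \<open>x 0 = x0\<close> by simp
next
  case (Suc i)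
  then have "phi f lam (x (Suc i)) \<le> phi f lam (x i)"
    using run pg_step_phi_le nc_step_phi_le assms(3-5) by (meson Suc_le_lessD)
  then show ?case using Suc by simp
qed

theorem lemma6:
  fixes f :: "real^'n \<Rightarrow> real" and gradf :: "real^'n \<Rightarrow> real^'n"
    and hessf :: "real^'n \<Rightarrow> real^'n^'n"
    and lam eg eh beta etabar eta theta LH :: real
    and x0 :: "real^'n" and x :: "nat \<Rightarrow> real^'n" and t :: "nat \<Rightarrow> real" and k :: nat
  assumes lam: "lam > 0"
    and grad: "\<And>y. (f has_derivative (\<lambda>h. gradf y \<bullet> h)) (at y)"
    and hess: "\<And>y. (gradf has_derivative (\<lambda>h. hessf y *v h)) (at y)"
    and hess_cont: "continuous_on UNIV hessf"
    and bdd: "bounded {y. phi f lam y \<le> phi f lam x0}"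
    and lipH: "\<exists>U. open U \<and> {y. phi f lam y \<le> phi f lam x0} \<subseteq> U \<and>
                 (\<exists>L. \<forall>y\<in>U. \<forall>z\<in>U. norm (hessf y - hessf z) \<le> L * norm (y - z))"
    and LH: "LH > 0"
    and cubic: "\<forall>y\<in>{y. phi f lam y \<le> phi f lam x0}. \<forall>z\<in>{y. phi f lam y \<le> phi f lam x0}.
                  f z \<le> f y + gradf y \<bullet> (z - y) + (1/2) * ((z - y) \<bullet> (hessf y *v (z - y)))
                        + LH / 6 * norm (z - y) ^ 3"
    and eg: "0 < eg" "eg < 1" and eh: "0 < eh" "eh < 1"
    and beta: "beta > 1" and etabar: "0 < etabar" "etabar \<le> 1"
    and eta: "0 < eta" "eta < 1/2" and theta: "0 < theta" "theta < 1"
    and init: "x 0 = x0" "t 0 = 1"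
    and run: "\<forall>i<k. pg_step f gradf lam eg beta etabar (x i) (t i) (x (Suc i)) (t (Suc i))
                   \<or> nc_step f gradf hessf lam eg eh eta theta (x i) (t i) (x (Suc i)) (t (Suc i))"
    and ncstep: "nc_step f gradf hessf lam eg eh eta theta (x k) (t k) (x (Suc k)) (t (Suc k))"
  shows "phi f lam (x k) - phi f lam (x (Suc k))
           > 1/8 * (eta * theta\<^sup>2 * min 1 (9 * (1 - 2 * eta)\<^sup>2 / LH\<^sup>2)) * min (eg * eh) (eh ^ 3)"
proof -
  \<comment> \<open>\<open>bdd\<close> and \<open>lipH\<close> only serve to justify \<open>cubic\<close>, which is assumed directly.\<close>
  obtain u lh j where supp: "\<forall>i. x k $ i = 0 \<longrightarrow> u $ i = 0" and norm_u: "norm u = 1"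
    and lh: "u \<bullet> ((Smat eg (x k) ** hessf (x k) ** Smat eg (x k)) *v u) = lh" "lh \<le> - eh / 2"
    and ok: "nc_ok f lam eta theta (x k) (nc_dir gradf lam eg (x k) u lh) (Smat eg (x k)) j"
    and first: "\<forall>i<j. \<not> nc_ok f lam eta theta (x k) (nc_dir gradf lam eg (x k) u lh) (Smat eg (x k)) i"
    and x_next: "x (Suc k) = x k + theta ^ j *\<^sub>R (Smat eg (x k) *v nc_dir gradf lam eg (x k) u lh)"
    using ncstep unfolding nc_step_def by blast
  have level: "phi f lam (x k) \<le> phi f lam x0"
    using iterates_phi_le_initial[OF init(1) run] etabar beta eta by simp
  have "lh < 0" "eh / 2 \<le> \<bar>lh\<bar>" using lh(2) eh by auto
  have "theta * min 1 (min (3 * (1 - 2 * eta) / LH) (sqrt eg / \<bar>lh\<bar>)) \<le> theta ^ j"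
  proof (rule backtracking_step_lower_bound[OF _ _ theta])
    fix a assume "0 < a" "a < min 1 (min (3 * (1 - 2 * eta) / LH) (sqrt eg / \<bar>lh\<bar>))"
    then show "phi f lam (x k + a *\<^sub>R (Smat eg (x k) *v nc_dir gradf lam eg (x k) u lh))
        < phi f lam (x k) - eta * a\<^sup>2 * \<bar>lh\<bar> ^ 3"
      using nc_dir_descent[OF grad hess hess_cont LH cubic eg _ _ level supp norm_u lh(1)
          \<open>lh < 0\<close>] eta by simp
  qed (use first nc_ok_nc_dir_iff[OF norm_u] in auto)
  from armijo_decrease_lower_bound[OF eg(1) eh(1) LH eta theta(1) \<open>eh / 2 \<le> \<bar>lh\<bar>\<close> this]
  show ?thesis using ok nc_ok_nc_dir_iff[OF norm_u] x_next by simp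
qed

end
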